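(* Let $k$, $a$, $b$, $\ell$ be positive integers with $k = a\ell$ and $a \le b$. Let $P = b\ast[0,\ell-1] = \{0,b,2b,\ldots,(\ell-1)b\}$ and \[ A = P + [0,a-1] = \bigcup_{j=1}^{\ell}\big((j-1)b + [0,a-1]\big). \] Then $|A| = k$. Moreover, for every positive integer $h$, letting $Q = b\ast[0,h(\ell-1)] = \{0,b,2b,\ldots,h(\ell-1)b\}$, we have \[ hA = Q + [0,h(a-1)] \] and \[ |hA| = \begin{cases} (a + b(\ell-1) - 1)h + 1 & \text{if } a \le b \le (a-1)h+1, \\ (a-1)(\ell-1)h^2 + (a+\ell-2)h + 1 & \text{if } b \ge h(a-1)+1. \end{cases} \]
   Context: For real numbers $u,v$, the integer interval $[u,v]$ denotes $\{n \in \mathbf{Z} : u \le n \le v\}$. For a set $X$ of integers and an integer $\lambda$, $\lambda\ast X = \{\lambda x : x \in X\}$; for sets $X,Y$, $X+Y = \{x+y : x\in X, y \in Y\}$. For a positive integer $h$ and a finite set $A$ of integers, the $h$-fold sumset $hA$ is the set of all sums $a_1+\cdots+a_h$ with $a_1,\ldots,a_h \in A$ (not necessarily distinct). *)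

theory Defs
  imports Main
begin

definition dil :: "int \<Rightarrow> int set \<Rightarrow> int set" where
  "dil c X = {c * x | x. x \<in> X}"

definition sumset :: "int set \<Rightarrow> int set \<Rightarrow> int set" where
  "sumset X Y = {x + y | x y. x \<in> X \<and> y \<in> Y}"

definition hfold :: "nat \<Rightarrow> int set \<Rightarrow> int set" where
  "hfold h A = {s. \<exists>f. (\<forall>i<h. f i \<in> A) \<and> s = (\<Sum>i<h. f i)}"

end

theory Submission
  imports Defs
begin

text \<open>Since a \<le> b, every element of A is written uniquely as b j + t with
  0 \<le> j < l and 0 \<le> t < a, so |A| = a l. Forming h-fold sums commutes with
  dilation and with sumsets, and h[0,c] = [0,hc]; hence hA = Q + [0,h(a-1)].
  If h(a-1) < b the representation b j + t stays unique and |hA| is the product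
  of the two lengths; if b \<le> h(a-1) + 1 consecutive translates of [0,h(a-1)]
  overlap or abut, so hA is a single interval.\<close>

lemma sumset_dil_eq_image: "sumset (dil b X) Y = (\<lambda>(j, t). b * j + t) ` (X \<times> Y)"
  unfolding sumset_def dil_def by force

lemma inj_on_base_digits:
  fixes b :: int
  assumes "Y \<subseteq> {0..<b}"
  shows "inj_on (\<lambda>(j, t). b * j + t) (X \<times> Y)"
proof (rule inj_onI, clarsimp)
  fix j t j' t'
  assume "t \<in> Y" "t' \<in> Y" and eq: "b * j + t = b * j' + t'"
  then have t: "0 \<le> t" "t < b" and t': "0 \<le> t'" "t' < b" using assms by auto
  have "(b * j + t) div b = j" "(b * j + t) mod b = t"
    using t by (simp_all add: add.commute)
  moreover have "(b * j' + t') div b = j'" "(b * j' + t') mod b = t'"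
    using t' by (simp_all add: add.commute)
  ultimately show "j = j' \<and> t = t'" using eq by metis
qed

lemma card_sumset_dil:
  fixes b :: int
  assumes "Y \<subseteq> {0..<b}"
  shows "card (sumset (dil b X) Y) = card X * card Y"
  unfolding sumset_dil_eq_image
  by (simp add: card_image[OF inj_on_base_digits[OF assms]] card_cartesian_product)

lemma sumset_dil_atLeastAtMost_eq:
  fixes b M N :: int
  assumes "0 \<le> M" "0 < b" "b \<le> N + 1"
  shows "sumset (dil b {0..M}) {0..N} = {0..b * M + N}"
proof
  show "sumset (dil b {0..M}) {0..N} \<subseteq> {0..b * M + N}"
  proof
    fix x assume "x \<in> sumset (dil b {0..M}) {0..N}"
    then obtain j t where "j \<in> {0..M}" "t \<in> {0..N}" "x = b * j + t"
      unfolding sumset_dil_eq_image by auto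
    moreover from this have "0 \<le> b * j" "b * j \<le> b * M" using assms by (auto intro: mult_left_mono)
    ultimately show "x \<in> {0..b * M + N}" by (simp del: mult_le_cancel_left_pos)
  qed
next
  show "{0..b * M + N} \<subseteq> sumset (dil b {0..M}) {0..N}"
  proof
    fix x assume x: "x \<in> {0..b * M + N}"
    define j where "j = min (x div b) M"
    have j: "j \<in> {0..M}" using x assms by (auto simp: j_def pos_imp_zdiv_nonneg_iff)
    have "x - b * j \<in> {0..N}"
    proof (cases "x div b \<le> M")
      case True
      then have "x - b * j = x mod b" by (simp add: j_def minus_div_mult_eq_mod[symmetric] mult.commute)
      moreover have "0 \<le> x mod b" "x mod b < b" using assms by simp_all
      ultimately show ?thesis using assms unfolding atLeastAtMost_iff by linarith
    next
      case False
      then have "b * (M + 1) \<le> b * (x div b)" using assms by (intro mult_left_mono) auto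
      also have "\<dots> \<le> x" using assms by (simp add: minus_mod_eq_mult_div[symmetric] mult.commute)
      finally show ?thesis using False x assms by (auto simp: j_def algebra_simps)
    qed
    with j have "(j, x - b * j) \<in> {0..M} \<times> {0..N}" by blast
    then show "x \<in> sumset (dil b {0..M}) {0..N}"
      unfolding sumset_dil_eq_image by (rule rev_image_eqI) simp
  qed
qed

lemma sumset_atLeastAtMost:
  fixes m n :: int
  assumes "0 \<le> m" "0 \<le> n"
  shows "sumset {0..m} {0..n} = {0..m + n}"
proof
  show "sumset {0..m} {0..n} \<subseteq> {0..m + n}"
    unfolding sumset_def by auto
next
  show "{0..m + n} \<subseteq> sumset {0..m} {0..n}"
  proof
    fix x assume "x \<in> {0..m + n}"
    then have "min x m \<in> {0..m}" "x - min x m \<in> {0..n}" using assms by auto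
    moreover have "x = min x m + (x - min x m)" by simp
    ultimately show "x \<in> sumset {0..m} {0..n}"
      unfolding sumset_def by blast
  qed
qed

lemma hfold_0 [simp]: "hfold 0 A = {0}"
  unfolding hfold_def by simp

lemma hfold_Suc: "hfold (Suc h) A = sumset (hfold h A) A"
proof
  show "hfold (Suc h) A \<subseteq> sumset (hfold h A) A"
  proof
    fix x assume "x \<in> hfold (Suc h) A"
    then obtain f where f: "\<forall>i<Suc h. f i \<in> A" and "x = (\<Sum>i<h. f i) + f h"
      unfolding hfold_def by auto
    moreover have "(\<Sum>i<h. f i) \<in> hfold h A" "f h \<in> A"
      using f unfolding hfold_def by (auto intro!: exI[of _ f])
    ultimately show "x \<in> sumset (hfold h A) A"
      unfolding sumset_def by blast
  qed
next
  show "sumset (hfold h A) A \<subseteq> hfold (Suc h) A"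
  proof
    fix x assume "x \<in> sumset (hfold h A) A"
    then obtain f a where f: "\<forall>i<h. f i \<in> A" and "a \<in> A" and x: "x = (\<Sum>i<h. f i) + a"
      unfolding hfold_def sumset_def by blast
    have "(\<Sum>i<h. (f(h := a)) i) = (\<Sum>i<h. f i)" by (rule sum.cong) auto
    then have "x = (\<Sum>i<Suc h. (f(h := a)) i)" using x by simp
    moreover have "\<forall>i<Suc h. (f(h := a)) i \<in> A" using f \<open>a \<in> A\<close> by (simp add: less_Suc_eq)
    ultimately show "x \<in> hfold (Suc h) A" unfolding hfold_def by blast
  qed
qed

lemma hfold_atLeastAtMost:
  fixes c :: int
  assumes "0 \<le> c"
  shows "hfold h {0..c} = {0..int h * c}"
  by (induction h) (simp_all add: hfold_Suc sumset_atLeastAtMost assms algebra_simps)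

lemma hfold_sumset: "hfold h (sumset X Y) = sumset (hfold h X) (hfold h Y)"
proof
  show "hfold h (sumset X Y) \<subseteq> sumset (hfold h X) (hfold h Y)"
  proof
    fix x assume "x \<in> hfold h (sumset X Y)"
    then obtain f where f: "\<forall>i<h. \<exists>u v. u \<in> X \<and> v \<in> Y \<and> f i = u + v" and x: "x = (\<Sum>i<h. f i)"
      unfolding hfold_def sumset_def by blast
    then obtain u v where uv: "\<forall>i<h. u i \<in> X \<and> v i \<in> Y \<and> f i = u i + v i"
      by metis
    then have "x = (\<Sum>i<h. u i) + (\<Sum>i<h. v i)"
      unfolding x sum.distrib[symmetric] by (intro sum.cong) auto
    with uv show "x \<in> sumset (hfold h X) (hfold h Y)"
      unfolding hfold_def sumset_def by blast
  qed
next
  show "sumset (hfold h X) (hfold h Y) \<subseteq> hfold h (sumset X Y)"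
    unfolding hfold_def sumset_def
    by clarify (rule exI[of _ "\<lambda>i. _ i + _ i"], auto simp: sum.distrib)
qed

lemma hfold_dil: "hfold h (dil c X) = dil c (hfold h X)"
proof
  show "hfold h (dil c X) \<subseteq> dil c (hfold h X)"
  proof
    fix x assume "x \<in> hfold h (dil c X)"
    then obtain f where f: "\<forall>i<h. \<exists>u. u \<in> X \<and> f i = c * u" and x: "x = (\<Sum>i<h. f i)"
      unfolding hfold_def dil_def by blast
    then obtain u where u: "\<forall>i<h. u i \<in> X \<and> f i = c * u i"
      by metis
    then have "x = c * (\<Sum>i<h. u i)"
      unfolding x sum_distrib_left by (intro sum.cong) auto
    with u show "x \<in> dil c (hfold h X)"
      unfolding hfold_def dil_def by blast
  qed
next
  show "dil c (hfold h X) \<subseteq> hfold h (dil c X)"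
    unfolding hfold_def dil_def
    by clarify (rule exI[of _ "\<lambda>i. c * _ i"], auto simp: sum_distrib_left)
qed

theorem mainTheorem2:
  fixes k a b l :: int
  assumes "k > 0" "a > 0" "b > 0" "l > 0" "k = a * l" "a \<le> b"
  defines "P \<equiv> dil b {0..l - 1}"
  defines "A \<equiv> sumset P {0..a - 1}"
  shows "int (card A) = k \<and>
    (\<forall>h::nat. h > 0 \<longrightarrow>
      (let Q = dil b {0..int h * (l - 1)} in
        hfold h A = sumset Q {0..int h * (a - 1)} \<and>
        (a \<le> b \<and> b \<le> (a - 1) * int h + 1 \<longrightarrow>
           int (card (hfold h A)) = (a + b * (l - 1) - 1) * int h + 1) \<and>
        (b \<ge> int h * (a - 1) + 1 \<longrightarrow>
           int (card (hfold h A)) = (a - 1) * (l - 1) * int h ^ 2 + (a + l - 2) * int h + 1)))"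
proof -
  have "{0..a - 1} \<subseteq> {0..<b}" using assms(6) by auto
  then have card_A: "int (card A) = k"
    using assms(2,4,5) by (simp add: A_def P_def card_sumset_dil)
  have hfold_A: "hfold h A = sumset (dil b {0..int h * (l - 1)}) {0..int h * (a - 1)}" for h
    using assms(2,4) by (simp add: A_def P_def hfold_sumset hfold_dil hfold_atLeastAtMost)
  have card_small_b: "int (card (hfold h A)) = (a + b * (l - 1) - 1) * int h + 1"
    if "b \<le> (a - 1) * int h + 1" for h
  proof -
    have "hfold h A = {0..b * (int h * (l - 1)) + int h * (a - 1)}"
      unfolding hfold_A using assms(3,4) that
      by (intro sumset_dil_atLeastAtMost_eq) (simp_all add: mult.commute)
    moreover have "0 \<le> b * (int h * (l - 1)) + int h * (a - 1)" using assms(2-4) by simp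
    ultimately show ?thesis by (simp add: algebra_simps)
  qed
  have card_large_b: "int (card (hfold h A)) = (a - 1) * (l - 1) * int h ^ 2 + (a + l - 2) * int h + 1"
    if "int h * (a - 1) + 1 \<le> b" for h
  proof -
    have "{0..int h * (a - 1)} \<subseteq> {0..<b}" using that by auto
    moreover have "0 \<le> int h * (l - 1)" "0 \<le> int h * (a - 1)" using assms(2,4) by simp_all
    ultimately have "int (card (hfold h A)) = (int h * (l - 1) + 1) * (int h * (a - 1) + 1)"
      unfolding hfold_A by (simp add: card_sumset_dil)
    then show ?thesis by (simp add: algebra_simps power2_eq_square)
  qed
  show ?thesis
    unfolding Let_def using card_A hfold_A card_small_b card_large_b by blast
qed

end
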